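(* Let $X\in\mathbb{R}^{n\times p}$, $y\in\mathbb{R}^n$, $\lambda>0$, $\alpha>0$, $G=X^\top X+\alpha I_p$, $\tilde y=X^\top y$, and $F(\beta,d)=\big(\beta-T_\lambda(\beta+d),\ G\beta+nd-\tilde y\big)$. Consider the semismooth Newton iteration $z^{k+1}=z^k-H_k^{-1}F(z^k)$, $z^k=(\beta^k,d^k)$, where $$H_k=\begin{pmatrix} I_p-D_k & -D_k\\ G & nI_p\end{pmatrix},\qquad D_k=\operatorname{diag}\big(\mathbf 1_{\{|\beta^k_i+d^k_i|>\lambda\}}\big)_{i=1}^p .$$ Let $\hat z=(\hat\beta_{\lambda,\alpha},\hat d_{\lambda,\alpha})$ be the unique root of $F$. Then there is a neighborhood $U$ of $\hat z$ such that for every $z^0\in U$ the iterates are well defined, $z^k\to\hat z$, and $\|z^{k+1}-\hat z\|_2=o(\|z^k-\hat z\|_2)$ (local superlinear convergence). In particular $\beta^k$ converges locally superlinearly to $\hat\beta_{\lambda,\alpha}$, the unique minimizer of $J_{\lambda,\alpha}(\beta)=\frac{1}{2n}\|X\beta-y\|_2^2+\lambda\|\beta\|_1+\frac{\alpha}{2n}\|\beta\|_2^2$.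
   Context: $T_\lambda$ is the componentwise soft-threshold operator $T_\lambda(x)_i=\operatorname{sgn}(x_i)\max(|x_i|-\lambda,0)$. Equivalently, with $A_k=\{i:|\beta^k_i+d^k_i|>\lambda\}$, $B_k$ its complement, one step reads: $\beta^{k+1}_{B_k}=0$, $d^{k+1}_{A_k}=\lambda\operatorname{sgn}(\beta^k_{A_k}+d^k_{A_k})$, $\beta^{k+1}_{A_k}=G_{A_kA_k}^{-1}(\tilde y_{A_k}-nd^{k+1}_{A_k})$, $d^{k+1}_{B_k}=(\tilde y_{B_k}-G_{B_kA_k}\beta^{k+1}_{A_k})/n$. *)

theory Defs
  imports "HOL-Analysis.Analysis" "HOL-Library.Landau_Symbols"
begin

definition soft_thr :: "real \<Rightarrow> real^'p \<Rightarrow> real^'p" where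
  "soft_thr lam x = (\<chi> i. sgn (x$i) * max (\<bar>x$i\<bar> - lam) 0)"

definition gram :: "real^'p^'n \<Rightarrow> real \<Rightarrow> real^'p^'p" where
  "gram X alpha = transpose X ** X + alpha *\<^sub>R mat 1"

definition ytil :: "real^'p^'n \<Rightarrow> real^'n \<Rightarrow> real^'p" where
  "ytil X y = transpose X *v y"

definition Fmap :: "real^'p^'n \<Rightarrow> real^'n \<Rightarrow> real \<Rightarrow> real \<Rightarrow>
    (real^'p) \<times> (real^'p) \<Rightarrow> (real^'p) \<times> (real^'p)" where
  "Fmap X y lam alpha z = (fst z - soft_thr lam (fst z + snd z),
     gram X alpha *v fst z + real CARD('n) *\<^sub>R snd z - ytil X y)"

definition Dind :: "real \<Rightarrow> (real^'p) \<times> (real^'p) \<Rightarrow> 'p \<Rightarrow> real" where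
  "Dind lam z i = (if \<bar>fst z $ i + snd z $ i\<bar> > lam then 1 else 0)"

definition Hmap :: "real^'p^'n \<Rightarrow> real \<Rightarrow> real \<Rightarrow> (real^'p) \<times> (real^'p) \<Rightarrow>
    (real^'p) \<times> (real^'p) \<Rightarrow> (real^'p) \<times> (real^'p)" where
  "Hmap X lam alpha z w = ((\<chi> i. (1 - Dind lam z i) * fst w $ i - Dind lam z i * snd w $ i),
     gram X alpha *v fst w + real CARD('n) *\<^sub>R snd w)"

primrec ssn_iter :: "real^'p^'n \<Rightarrow> real^'n \<Rightarrow> real \<Rightarrow> real \<Rightarrow>
    (real^'p) \<times> (real^'p) \<Rightarrow> nat \<Rightarrow> (real^'p) \<times> (real^'p)" where
  "ssn_iter X y lam alpha z0 0 = z0"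
| "ssn_iter X y lam alpha z0 (Suc k) =
     (let z = ssn_iter X y lam alpha z0 k
      in z - inv (Hmap X lam alpha z) (Fmap X y lam alpha z))"

definition Jobj :: "real^'p^'n \<Rightarrow> real^'n \<Rightarrow> real \<Rightarrow> real \<Rightarrow> real^'p \<Rightarrow> real" where
  "Jobj X y lam alpha b = (1 / (2 * real CARD('n))) * (norm (X *v b - y))\<^sup>2
     + lam * (\<Sum>i\<in>UNIV. \<bar>b $ i\<bar>) + (alpha / (2 * real CARD('n))) * (norm b)\<^sup>2"

end

theory Submission
  imports Defs
begin

text \<open>At a root \<open>(\<beta>, d)\<close> of \<open>F\<close>, the vector \<open>d\<close> is a subgradient of \<open>\<lambda>\<parallel>\<cdot>\<parallel>\<^sub>1\<close> at \<open>\<beta>\<close>, so \<open>J\<close> grows at least like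
  \<open>\<alpha>/(2n) \<parallel>b - \<beta>\<parallel>\<^sup>2\<close> away from \<open>\<beta>\<close>; this gives minimality and uniqueness.
  Each \<open>H\<^sub>k\<close> is invertible because \<open>D\<^sub>k\<close> is a 0/1 diagonal, so \<open>v \<bullet> w = 0\<close> for a kernel vector
  \<open>(v, w)\<close> and the positive definite \<open>G\<close> forces \<open>v = 0\<close>.  Since \<open>F\<close> is piecewise affine, on the
  open set where \<open>\<beta> + d\<close> stays on the same pieces of the soft threshold as at the root one has
  exactly \<open>H(z) (z - z\<^sup>*) = F(z)\<close> for the root \<open>z\<^sup>*\<close>; so a single Newton step from there lands
  on \<open>z\<^sup>*\<close>, and the superlinear rate holds trivially.\<close>

lemma gram_mult_vec: "gram X alpha *v w = transpose X *v (X *v w) + alpha *\<^sub>R w"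
  unfolding gram_def
  by (simp add: matrix_vector_mult_add_rdistrib matrix_vector_mul_assoc[symmetric]
        scaleR_matrix_vector_assoc[symmetric] matrix_vector_mul_lid)

lemma inner_gram_mult_vec:
  "v \<bullet> (gram X alpha *v w) = (X *v v) \<bullet> (X *v w) + alpha * (v \<bullet> w)"
  by (simp add: gram_mult_vec inner_add_right) (metis dot_lmul_matrix inner_commute)

lemma linear_Hmap: "linear (Hmap X lam alpha z)"
proof (rule linearI)
  fix v w
  show "Hmap X lam alpha z (v + w) = Hmap X lam alpha z v + Hmap X lam alpha z w"
    by (simp add: Hmap_def prod_eq_iff vec_eq_iff matrix_vector_right_distrib
        scaleR_add_right ring_distribs add_ac)
next
  fix c :: real and v
  show "Hmap X lam alpha z (c *\<^sub>R v) = c *\<^sub>R Hmap X lam alpha z v"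
    by (simp add: Hmap_def prod_eq_iff vec_eq_iff matrix_vector_mult_scaleR
        scaleR_add_right ring_distribs mult_ac)
qed

lemma Hmap_eq_0_imp_eq_0:
  fixes X :: "real^'p^'n"
  assumes "alpha > 0" and "Hmap X lam alpha z (v, w) = 0"
  shows "v = 0 \<and> w = 0"
proof -
  have orth: "v $ i * w $ i = 0" for i
    using assms(2) unfolding Hmap_def Dind_def
    by (auto simp: prod_eq_iff vec_eq_iff dest: spec[of _ i] split: if_splits)
  have eq2: "gram X alpha *v v + real CARD('n) *\<^sub>R w = 0"
    using assms(2) by (simp add: Hmap_def prod_eq_iff)
  have "v \<bullet> w = 0" by (simp add: inner_vec_def orth)
  hence "(X *v v) \<bullet> (X *v v) + alpha * (v \<bullet> v) = v \<bullet> (gram X alpha *v v + real CARD('n) *\<^sub>R w)"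
    by (simp add: inner_add_right inner_gram_mult_vec)
  also have "\<dots> = 0" by (simp add: eq2)
  finally have "alpha * (v \<bullet> v) = 0"
    using assms(1) by (smt (verit) inner_ge_zero mult_nonneg_nonneg)
  hence "v = 0" using assms(1) by simp
  with eq2 show ?thesis by simp
qed

lemma bij_Hmap:
  fixes X :: "real^'p^'n"
  assumes "alpha > 0"
  shows "bij (Hmap X lam alpha z)"
proof -
  have "inj (Hmap X lam alpha z)"
    using Hmap_eq_0_imp_eq_0[OF assms] linear_injective_0[OF linear_Hmap]
    by (metis prod.collapse zero_prod_def)
  with linear_inj_imp_surj[OF linear_Hmap] show ?thesis by (simp add: bij_def)
qed

lemma soft_threshold_fixed_point:
  fixes b d lam :: real
  assumes "lam \<ge> 0" and "b = sgn (b + d) * max (\<bar>b + d\<bar> - lam) 0"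
  shows "\<bar>d\<bar> \<le> lam" and "d * b = lam * \<bar>b\<bar>"
    and "lam \<le> \<bar>b + d\<bar> \<Longrightarrow> d = lam * sgn (b + d)"
    and "\<bar>b + d\<bar> \<le> lam \<Longrightarrow> b = 0"
proof -
  consider "d = lam" "0 < b" | "d = - lam" "b < 0" | "\<bar>d\<bar> \<le> lam" "b = 0"
  proof (cases "lam < \<bar>b + d\<bar>")
    case True
    then show ?thesis using assms that by (cases "0 < b + d") (auto simp: sgn_if)
  next
    case False
    then show ?thesis using assms that by (simp add: max_def)
  qed
  then show "\<bar>d\<bar> \<le> lam" and "d * b = lam * \<bar>b\<bar>"
    and "lam \<le> \<bar>b + d\<bar> \<Longrightarrow> d = lam * sgn (b + d)"
    and "\<bar>b + d\<bar> \<le> lam \<Longrightarrow> b = 0"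
    using assms(1) by (cases; auto simp: sgn_if)+
qed

lemma Fmap_eq_0_iff:
  fixes X :: "real^'p^'n"
  shows "Fmap X y lam alpha z = 0 \<longleftrightarrow>
    fst z = soft_thr lam (fst z + snd z)
    \<and> gram X alpha *v fst z + real CARD('n) *\<^sub>R snd z = ytil X y"
  by (simp add: Fmap_def prod_eq_iff)

lemma Fmap_root_component:
  assumes "Fmap X y lam alpha z = 0"
  shows "fst z $ i = sgn (fst z $ i + snd z $ i) * max (\<bar>fst z $ i + snd z $ i\<bar> - lam) 0"
  using arg_cong[where f = "\<lambda>v. v $ i", OF conjunct1[OF assms[unfolded Fmap_eq_0_iff]]]
  by (simp add: soft_thr_def)

lemma l1_subgradient_ineq:
  fixes b c d :: "real^'p"
  assumes "\<And>i. \<bar>d $ i\<bar> \<le> lam" and "\<And>i. d $ i * c $ i = lam * \<bar>c $ i\<bar>"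
  shows "lam * (\<Sum>i\<in>UNIV. \<bar>c $ i\<bar>) + d \<bullet> (b - c) \<le> lam * (\<Sum>i\<in>UNIV. \<bar>b $ i\<bar>)"
proof -
  have "d $ i * b $ i \<le> lam * \<bar>b $ i\<bar>" for i
    using assms(1)[of i] by (metis abs_ge_self abs_ge_zero abs_mult dual_order.trans mult_right_mono)
  hence "lam * \<bar>c $ i\<bar> + d $ i * (b $ i - c $ i) \<le> lam * \<bar>b $ i\<bar>" for i
    using assms(2)[of i] by (simp add: right_diff_distrib)
  hence "(\<Sum>i\<in>UNIV. lam * \<bar>c $ i\<bar> + d $ i * (b $ i - c $ i)) \<le> (\<Sum>i\<in>UNIV. lam * \<bar>b $ i\<bar>)"
    by (intro sum_mono)
  thus ?thesis by (simp add: inner_vec_def sum_distrib_left sum.distrib)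
qed

lemma residual_expansion:
  "(norm (X *v (c + h) - y))\<^sup>2 + alpha * (norm (c + h))\<^sup>2
   = (norm (X *v c - y))\<^sup>2 + alpha * (norm c)\<^sup>2
     + 2 * (h \<bullet> (gram X alpha *v c - ytil X y)) + h \<bullet> (gram X alpha *v h)"
proof -
  have "h \<bullet> ytil X y = (X *v h) \<bullet> y"
    by (simp add: ytil_def) (metis dot_lmul_matrix inner_commute)
  thus ?thesis
    by (simp add: power2_norm_eq_inner inner_diff_right inner_gram_mult_vec
        matrix_vector_right_distrib inner_add_left inner_add_right inner_diff_left
        inner_commute algebra_simps)
qed

lemma Jobj_eq:
  fixes X :: "real^'p^'n"
  shows "Jobj X y lam alpha b = ((norm (X *v b - y))\<^sup>2 + alpha * (norm b)\<^sup>2) / (2 * real CARD('n))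
    + lam * (\<Sum>i\<in>UNIV. \<bar>b $ i\<bar>)"
  by (simp add: Jobj_def add_divide_distrib)

lemma Jobj_quadratic_growth:
  fixes X :: "real^'p^'n"
  assumes root: "Fmap X y lam alpha z = 0" and "lam \<ge> 0"
  shows "Jobj X y lam alpha (fst z) + alpha / (2 * real CARD('n)) * (norm (b - fst z))\<^sup>2
    \<le> Jobj X y lam alpha b"
proof -
  define N where "N = real CARD('n)"
  define h where "h = b - fst z"
  have N: "N > 0" by (simp add: N_def)
  have "ytil X y = gram X alpha *v fst z + N *\<^sub>R snd z"
    using root by (simp add: Fmap_eq_0_iff N_def)
  hence "gram X alpha *v fst z - ytil X y = - N *\<^sub>R snd z" by simp
  with residual_expansion[of X "fst z" h y alpha]
  have smooth: "(norm (X *v b - y))\<^sup>2 + alpha * (norm b)\<^sup>2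
      = (norm (X *v fst z - y))\<^sup>2 + alpha * (norm (fst z))\<^sup>2
        - 2 * N * (snd z \<bullet> h) + (norm (X *v h))\<^sup>2 + alpha * (norm h)\<^sup>2"
    by (simp add: h_def inner_gram_mult_vec power2_norm_eq_inner inner_commute)
  \<comment> \<open>The linear term \<open>- N (d \<bullet> h)\<close> is absorbed by the subgradient \<open>d\<close> of the \<open>\<ell>\<^sub>1\<close> term.\<close>
  have l1: "lam * (\<Sum>i\<in>UNIV. \<bar>fst z $ i\<bar>) + snd z \<bullet> h \<le> lam * (\<Sum>i\<in>UNIV. \<bar>b $ i\<bar>)"
    unfolding h_def
    by (rule l1_subgradient_ineq)
       (use soft_threshold_fixed_point[OF \<open>lam \<ge> 0\<close> Fmap_root_component[OF root]] in auto)
  have "(2 * N * (snd z \<bullet> h)) / (2 * N) = snd z \<bullet> h" using N by simp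
  moreover have "0 \<le> (norm (X *v h))\<^sup>2 / (2 * N)" using N by simp
  ultimately show ?thesis
    using smooth l1 unfolding Jobj_eq N_def[symmetric] h_def[symmetric]
    by (simp add: add_divide_distrib diff_divide_distrib)
qed

lemma Jobj_root_argmin:
  fixes X :: "real^'p^'n"
  assumes root: "Fmap X y lam alpha z = 0" and "lam \<ge> 0" and "alpha > 0"
  shows "Jobj X y lam alpha (fst z) \<le> Jobj X y lam alpha b"
    and "Jobj X y lam alpha b \<le> Jobj X y lam alpha (fst z) \<Longrightarrow> b = fst z"
proof -
  have c: "alpha / (2 * real CARD('n)) > 0" using assms(3) by simp
  note growth = Jobj_quadratic_growth[OF root \<open>lam \<ge> 0\<close>, of b]
  show "Jobj X y lam alpha (fst z) \<le> Jobj X y lam alpha b"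
    using growth c by (smt (verit) zero_le_power2 mult_nonneg_nonneg)
  assume "Jobj X y lam alpha b \<le> Jobj X y lam alpha (fst z)"
  with growth c have "(norm (b - fst z))\<^sup>2 \<le> 0"
    by (smt (verit) mult_pos_pos zero_less_power2)
  thus "b = fst z" by simp
qed

lemma Fmap_root_unique:
  fixes X :: "real^'p^'n"
  assumes "Fmap X y lam alpha z = 0" and "Fmap X y lam alpha z' = 0"
    and "lam \<ge> 0" and "alpha > 0"
  shows "z = z'"
proof -
  have fst_eq: "fst z = fst z'"
    using Jobj_root_argmin[OF assms(1,3,4)] Jobj_root_argmin[OF assms(2,3,4)]
    by (metis order_antisym)
  have "real CARD('n) *\<^sub>R snd z = real CARD('n) *\<^sub>R snd z'"
    using assms(1,2) fst_eq unfolding Fmap_eq_0_iff by (metis add_left_cancel)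
  with fst_eq show ?thesis by (simp add: prod_eq_iff)
qed

text \<open>Closer than this to \<open>t = \<beta>\<^sub>i + d\<^sub>i\<close> at the root, \<open>\<beta>\<^sub>i + d\<^sub>i\<close> lies on a piece of the soft
  threshold that is consistent with the root (at the kink \<open>\<bar>t\<bar> = \<lambda>\<close> both neighbouring pieces are).\<close>
definition ssn_radius :: "real \<Rightarrow> real \<Rightarrow> real" where
  "ssn_radius lam t = (if \<bar>t\<bar> = lam then lam else \<bar>\<bar>t\<bar> - lam\<bar>)"

lemma soft_threshold_newton_step_exact:
  fixes b d bh dh lam :: real
  assumes "lam \<ge> 0" and root: "bh = sgn (bh + dh) * max (\<bar>bh + dh\<bar> - lam) 0"
    and near: "\<bar>(b + d) - (bh + dh)\<bar> < ssn_radius lam (bh + dh)"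
  shows "(1 - (if \<bar>b + d\<bar> > lam then 1 else 0)) * (b - bh)
       - (if \<bar>b + d\<bar> > lam then 1 else 0) * (d - dh)
       = b - sgn (b + d) * max (\<bar>b + d\<bar> - lam) 0"
proof -
  define s where "s = bh + dh"
  define v where "v = b + d"
  note root_facts = soft_threshold_fixed_point[OF \<open>lam \<ge> 0\<close> root, folded s_def]
  have near': "\<bar>v - s\<bar> < ssn_radius lam s" using near unfolding s_def v_def .
  show ?thesis
  proof (cases "\<bar>v\<bar> > lam")
    case True
    have "lam \<le> \<bar>s\<bar>"
      using near' True by (auto simp: ssn_radius_def split: if_splits)
    moreover have "\<bar>v - s\<bar> < \<bar>s\<bar>"
      using near' \<open>lam \<le> \<bar>s\<bar>\<close> \<open>lam \<ge> 0\<close> by (auto simp: ssn_radius_def split: if_splits)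
    hence "sgn v = sgn s" by (auto simp: sgn_if)
    ultimately have "dh = lam * sgn v" using root_facts(3) by simp
    moreover have "sgn v * max (\<bar>v\<bar> - lam) 0 = v - lam * sgn v"
      using True by (auto simp: sgn_if abs_if max_def)
    ultimately show ?thesis using True unfolding v_def by (simp add: algebra_simps)
  next
    case False
    have "\<bar>s\<bar> \<le> lam"
      using near' False by (auto simp: ssn_radius_def split: if_splits)
    hence "bh = 0" using root_facts(4) by simp
    with False show ?thesis unfolding v_def by simp
  qed
qed

definition ssn_basin :: "real \<Rightarrow> (real^'p) \<times> (real^'p) \<Rightarrow> ((real^'p) \<times> (real^'p)) set" where
  "ssn_basin lam zh = {z. \<forall>i. \<bar>(fst z + snd z - (fst zh + snd zh)) $ i\<bar>
      < ssn_radius lam ((fst zh + snd zh) $ i)}"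

lemma open_ssn_basin:
  fixes zh :: "(real^'p) \<times> (real^'p)"
  shows "open (ssn_basin lam zh)"
proof -
  have "ssn_basin lam zh = (\<Inter>i. {z. \<bar>(fst z + snd z - (fst zh + snd zh)) $ i\<bar>
      < ssn_radius lam ((fst zh + snd zh) $ i)})"
    by (auto simp: ssn_basin_def)
  moreover have "open {z :: (real^'p) \<times> (real^'p). \<bar>(fst z + snd z - (fst zh + snd zh)) $ i\<bar>
      < ssn_radius lam ((fst zh + snd zh) $ i)}" for i
    by (intro open_Collect_less continuous_intros)
  ultimately show ?thesis by auto
qed

lemma root_in_ssn_basin:
  assumes "lam > 0"
  shows "zh \<in> ssn_basin lam zh"
  using assms by (auto simp: ssn_basin_def ssn_radius_def)

lemma Hmap_diff_root_eq_Fmap: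
  fixes X :: "real^'p^'n"
  assumes root: "Fmap X y lam alpha zh = 0" and "lam \<ge> 0" and "z \<in> ssn_basin lam zh"
  shows "Hmap X lam alpha z (z - zh) = Fmap X y lam alpha z"
proof (rule prod_eqI)
  have near: "\<bar>(fst z $ i + snd z $ i) - (fst zh $ i + snd zh $ i)\<bar>
      < ssn_radius lam (fst zh $ i + snd zh $ i)" for i
    using assms(3) by (auto simp: ssn_basin_def)
  show "fst (Hmap X lam alpha z (z - zh)) = fst (Fmap X y lam alpha z)"
    using soft_threshold_newton_step_exact[OF \<open>lam \<ge> 0\<close> Fmap_root_component[OF root] near]
    by (simp add: Hmap_def Fmap_def Dind_def soft_thr_def vec_eq_iff)
  have "ytil X y = gram X alpha *v fst zh + real CARD('n) *\<^sub>R snd zh"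
    using root by (simp add: Fmap_eq_0_iff)
  then show "snd (Hmap X lam alpha z (z - zh)) = snd (Fmap X y lam alpha z)"
    by (simp add: Hmap_def Fmap_def matrix_vector_mult_diff_distrib scaleR_diff_right algebra_simps)
qed

lemma ssn_step_eq_root:
  fixes X :: "real^'p^'n"
  assumes "Fmap X y lam alpha zh = 0" and "lam \<ge> 0" and "alpha > 0"
    and "z \<in> ssn_basin lam zh"
  shows "z - inv (Hmap X lam alpha z) (Fmap X y lam alpha z) = zh"
proof -
  have "inv (Hmap X lam alpha z) (Fmap X y lam alpha z) = z - zh"
    unfolding Hmap_diff_root_eq_Fmap[OF assms(1,2,4), symmetric]
    by (rule inv_f_f[OF bij_is_inj[OF bij_Hmap[OF assms(3)]]])
  then show ?thesis by simp
qed

lemma ssn_iter_Suc_eq_root: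
  fixes X :: "real^'p^'n"
  assumes root: "Fmap X y lam alpha zh = 0" and "lam > 0" and "alpha > 0"
    and "z0 \<in> ssn_basin lam zh"
  shows "ssn_iter X y lam alpha z0 (Suc k) = zh"
proof (induction k)
  case 0
  show ?case using ssn_step_eq_root[OF root _ \<open>alpha > 0\<close> \<open>z0 \<in> _\<close>] \<open>lam > 0\<close> by simp
next
  case (Suc k)
  then show ?case
    using ssn_step_eq_root[OF root _ \<open>alpha > 0\<close> root_in_ssn_basin] \<open>lam > 0\<close>
    by (simp add: Let_def)
qed

lemma ssn_local_convergence:
  fixes X :: "real^'p^'n"
  assumes "Fmap X y lam alpha zh = 0" and "lam > 0" and "alpha > 0"
    and "z0 \<in> ssn_basin lam zh"
  shows "(\<forall>k. bij (Hmap X lam alpha (ssn_iter X y lam alpha z0 k)))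
         \<and> ssn_iter X y lam alpha z0 \<longlonglongrightarrow> zh
         \<and> (\<lambda>k. norm (ssn_iter X y lam alpha z0 (Suc k) - zh))
             \<in> o[sequentially](\<lambda>k. norm (ssn_iter X y lam alpha z0 k - zh))
         \<and> (\<lambda>k. fst (ssn_iter X y lam alpha z0 k)) \<longlonglongrightarrow> fst zh
         \<and> (\<lambda>k. norm (fst (ssn_iter X y lam alpha z0 (Suc k)) - fst zh))
             \<in> o[sequentially](\<lambda>k. norm (ssn_iter X y lam alpha z0 k - zh))"
proof -
  note iter = ssn_iter_Suc_eq_root[OF assms]
  have lim: "ssn_iter X y lam alpha z0 \<longlonglongrightarrow> zh"
    by (rule LIMSEQ_imp_Suc) (simp only: iter tendsto_const)
  show ?thesis
    using lim tendsto_fst[OF lim] by (simp del: ssn_iter.simps add: iter bij_Hmap[OF assms(3)])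
qed

theorem theorem2:
  fixes X :: "real^'p^'n" and y :: "real^'n" and lam alpha :: real
    and zhat :: "(real^'p) \<times> (real^'p)"
  assumes "lam > 0" and "alpha > 0"
    and "Fmap X y lam alpha zhat = 0"
  shows "(\<forall>z. Fmap X y lam alpha z = 0 \<longrightarrow> z = zhat)
    \<and> (\<exists>U. open U \<and> zhat \<in> U \<and>
        (\<forall>z0\<in>U.
           (\<forall>k. bij (Hmap X lam alpha (ssn_iter X y lam alpha z0 k)))
         \<and> ssn_iter X y lam alpha z0 \<longlonglongrightarrow> zhat
         \<and> (\<lambda>k. norm (ssn_iter X y lam alpha z0 (Suc k) - zhat))
             \<in> o[sequentially](\<lambda>k. norm (ssn_iter X y lam alpha z0 k - zhat))
         \<and> (\<lambda>k. fst (ssn_iter X y lam alpha z0 k)) \<longlonglongrightarrow> fst zhat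
         \<and> (\<lambda>k. norm (fst (ssn_iter X y lam alpha z0 (Suc k)) - fst zhat))
             \<in> o[sequentially](\<lambda>k. norm (ssn_iter X y lam alpha z0 k - zhat))))
    \<and> (\<forall>b. Jobj X y lam alpha (fst zhat) \<le> Jobj X y lam alpha b)
    \<and> (\<forall>b. Jobj X y lam alpha b \<le> Jobj X y lam alpha (fst zhat) \<longrightarrow> b = fst zhat)"
proof -
  have "lam \<ge> 0" using assms(1) by simp
  note argmin = Jobj_root_argmin[OF assms(3) \<open>lam \<ge> 0\<close> assms(2)]
  show ?thesis
  proof (intro conjI allI impI exI[of _ "ssn_basin lam zhat"] ballI)
    show "z = zhat" if "Fmap X y lam alpha z = 0" for z
      using Fmap_root_unique[OF that assms(3) \<open>lam \<ge> 0\<close> assms(2)] .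
  qed (simp_all del: ssn_iter.simps add: open_ssn_basin root_in_ssn_basin assms(1) argmin
      ssn_local_convergence[OF assms(3,1,2)])
qed

end
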